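(* Let $\Gamma$ be a graph with $N$ edges. Then $\mathcal{T}(\Gamma)=\{(\mathbf{z},M\mathbf{a}):\ \mathbf{z}\in\Sigma(\Gamma),\ \mathbf{a}\in\mathbb{C}^{2N},\ U(\mathbf{z})\mathbf{a}=\mathbf{a}\}$.
   Context: $\Gamma$ is a finite graph with edges $e_1,\dots,e_N$, each oriented from $o(e_j)$ to $\tau(e_j)$; $\deg(v)$ counts edge-ends at $v$ (loops twice). For $\boldsymbol{\ell}\in\mathbb{R}_+^N$, $(\Gamma,\boldsymbol{\ell})$ has $e_j\cong[0,\ell_j]$ ($t=0$ at $o(e_j)$) and Laplacian $-d^2/dt^2$ with standard vertex conditions (continuity, and $\sum_{o(e_j)=v}f'|_{e_j}(0)-\sum_{\tau(e_j)=v}f'|_{e_j}(\ell_j)=0$). For an eigenfunction with eigenvalue $k^2$, $k>0$: $f|_{e_j}(t)=A_j\cos(kt)+B_j\sin(kt)=C_j\cos(k(\ell_j-t))+D_j\sin(k(\ell_j-t))$ and $\mathrm{tr}_k(f)=(A_1,\dots,A_N,C_1,\dots,C_N,B_1,\dots,B_N,D_1,\dots,D_N)$; for $k=0$, $f\equiv c$ gives $A_j=C_j=c$, $B_j=D_j=0$. $\mathcal{T}(\Gamma)=\{(\exp(ik\boldsymbol{\ell}),\mathrm{tr}_k(f)):\boldsymbol{\ell}\in\mathbb{R}_+^N,\ k^2\text{ eigenvalue},\ f\text{ in its eigenspace (including }0)\}\subset\mathbb{T}^N\times\mathbb{C}^{4N}$, with $\exp(ik\boldsymbol{\ell})=(e^{ik\ell_j})_j$;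 $\Sigma(\Gamma)$ is its projection to $\mathbb{T}^N$. Let $S$ be the real orthogonal $2N\times2N$ matrix acting on $\mathbf{a}=(a_1,\dots,a_N,b_1,\dots,b_N)$ by $(S\mathbf{a})_j=\frac{2}{\deg(o(e_j))}\big(\sum_{i:o(e_i)=o(e_j)}b_i+\sum_{i:\tau(e_i)=o(e_j)}a_i\big)-b_j$, $(S\mathbf{a})_{N+j}=\frac{2}{\deg(\tau(e_j))}\big(\sum_{i:o(e_i)=\tau(e_j)}b_i+\sum_{i:\tau(e_i)=\tau(e_j)}a_i\big)-a_j$; $U(\mathbf{z})=\mathrm{diag}(\mathbf{z},\mathbf{z})S$ where $\mathrm{diag}(\mathbf{z},\mathbf{z})$ has diagonal $(z_1,\dots,z_N,z_1,\dots,z_N)$. (With $f|_{e_j}(t)=a_je^{ik(t-\ell_j)}+b_je^{-ikt}$, $f$ is an eigenfunction with eigenvalue $k^2$ iff $U(\exp(ik\boldsymbol{\ell}))\mathbf{a}=\mathbf{a}$.) $J=\begin{pmatrix}0&I_N\\ I_N&0\end{pmatrix}$ and $M=\begin{pmatrix}S+J\\ i(S-J)\end{pmatrix}$, a $4N\times2N$ matrix. *)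

theory Defs
  imports "HOL-Analysis.Analysis"
begin

text \<open>A finite graph with edges e_0,...,e_(N-1) (0-based), edge j oriented from
  orig j to tm j; vertices of type 'v.  Vectors are complex lists.\<close>

definition gdeg :: "nat \<Rightarrow> (nat \<Rightarrow> 'v) \<Rightarrow> (nat \<Rightarrow> 'v) \<Rightarrow> 'v \<Rightarrow> nat" where
  "gdeg N orig tm v = card {j. j < N \<and> orig j = v} + card {j. j < N \<and> tm j = v}"

text \<open>Eigenfunction (possibly zero) of the standard Laplacian on (Gamma, l) with
  eigenvalue k^2: f j is the function on edge j \<cong> [0, l j], f' j its derivative.\<close>
definition is_eigfun ::
  "nat \<Rightarrow> (nat \<Rightarrow> 'v) \<Rightarrow> (nat \<Rightarrow> 'v) \<Rightarrow> (nat \<Rightarrow> real) \<Rightarrow> real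
   \<Rightarrow> (nat \<Rightarrow> real \<Rightarrow> complex) \<Rightarrow> (nat \<Rightarrow> real \<Rightarrow> complex) \<Rightarrow> bool" where
  "is_eigfun N orig tm l k f f' \<longleftrightarrow>
     (\<forall>j<N. \<forall>t\<in>{0..l j}.
        (f j has_vector_derivative f' j t) (at t within {0..l j}) \<and>
        (f' j has_vector_derivative (- complex_of_real (k\<^sup>2) * f j t)) (at t within {0..l j})) \<and>
     (\<exists>\<phi> :: 'v \<Rightarrow> complex. \<forall>j<N. f j 0 = \<phi> (orig j) \<and> f j (l j) = \<phi> (tm j)) \<and>
     (\<forall>v. (\<Sum>j | j < N \<and> orig j = v. f' j 0) - (\<Sum>j | j < N \<and> tm j = v. f' j (l j)) = 0)"

definition is_eigval ::
  "nat \<Rightarrow> (nat \<Rightarrow> 'v) \<Rightarrow> (nat \<Rightarrow> 'v) \<Rightarrow> (nat \<Rightarrow> real) \<Rightarrow> real \<Rightarrow> bool" where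
  "is_eigval N orig tm l k \<longleftrightarrow>
     (\<exists>g g'. is_eigfun N orig tm l k g g' \<and> (\<exists>j<N. \<exists>t\<in>{0..l j}. g j t \<noteq> 0))"

text \<open>tr_k(f) = (A_1..A_N, C_1..C_N, B_1..B_N, D_1..D_N), where
  A_j = f_j(0), C_j = f_j(l_j), B_j = f_j'(0)/k, D_j = -f_j'(l_j)/k (k > 0),
  and B_j = D_j = 0 for k = 0.\<close>
definition trk ::
  "nat \<Rightarrow> (nat \<Rightarrow> real) \<Rightarrow> real \<Rightarrow> (nat \<Rightarrow> real \<Rightarrow> complex) \<Rightarrow> (nat \<Rightarrow> real \<Rightarrow> complex)
   \<Rightarrow> complex list" where
  "trk N l k f f' =
     map (\<lambda>j. f j 0) [0..<N] @ map (\<lambda>j. f j (l j)) [0..<N] @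
     map (\<lambda>j. if k = 0 then 0 else f' j 0 / complex_of_real k) [0..<N] @
     map (\<lambda>j. if k = 0 then 0 else - f' j (l j) / complex_of_real k) [0..<N]"

definition expikl :: "nat \<Rightarrow> real \<Rightarrow> (nat \<Rightarrow> real) \<Rightarrow> complex list" where
  "expikl N k l = map (\<lambda>j. exp (\<i> * complex_of_real (k * l j))) [0..<N]"

definition Tset :: "nat \<Rightarrow> (nat \<Rightarrow> 'v) \<Rightarrow> (nat \<Rightarrow> 'v) \<Rightarrow> (complex list \<times> complex list) set" where
  "Tset N orig tm =
     {(expikl N k l, trk N l k f f') | l k f f'.
        (\<forall>j<N. l j > 0) \<and> k \<ge> 0 \<and> is_eigval N orig tm l k \<and> is_eigfun N orig tm l k f f'}"

definition Sigma_set :: "nat \<Rightarrow> (nat \<Rightarrow> 'v) \<Rightarrow> (nat \<Rightarrow> 'v) \<Rightarrow> complex list set" where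
  "Sigma_set N orig tm = fst ` Tset N orig tm"

text \<open>Matrix S (2N x 2N, 0-based indices), U(z) = diag(z,z) S, J, M = [S+J; i(S-J)].\<close>
definition Smat :: "nat \<Rightarrow> (nat \<Rightarrow> 'v) \<Rightarrow> (nat \<Rightarrow> 'v) \<Rightarrow> nat \<Rightarrow> nat \<Rightarrow> real" where
  "Smat N orig tm r c =
    (if r < N then
       (let v = orig r; d = real (gdeg N orig tm v) in
        if c < N then (if tm c = v then 2 / d else 0)
        else (if orig (c - N) = v then 2 / d else 0) - (if c - N = r then 1 else 0))
     else
       (let j = r - N; v = tm j; d = real (gdeg N orig tm v) in
        if c < N then (if tm c = v then 2 / d else 0) - (if c = j then 1 else 0)
        else (if orig (c - N) = v then 2 / d else 0)))"

definition Umat :: "nat \<Rightarrow> (nat \<Rightarrow> 'v) \<Rightarrow> (nat \<Rightarrow> 'v) \<Rightarrow> complex list \<Rightarrow> nat \<Rightarrow> nat \<Rightarrow> complex" where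
  "Umat N orig tm z r c = z ! (r mod N) * complex_of_real (Smat N orig tm r c)"

definition Jmat :: "nat \<Rightarrow> nat \<Rightarrow> nat \<Rightarrow> real" where
  "Jmat N r c = (if c = (r + N) mod (2 * N) then 1 else 0)"

definition Mmat :: "nat \<Rightarrow> (nat \<Rightarrow> 'v) \<Rightarrow> (nat \<Rightarrow> 'v) \<Rightarrow> nat \<Rightarrow> nat \<Rightarrow> complex" where
  "Mmat N orig tm r c =
    (if r < 2 * N then complex_of_real (Smat N orig tm r c + Jmat N r c)
     else \<i> * complex_of_real (Smat N orig tm (r - 2 * N) c - Jmat N (r - 2 * N) c))"

definition matvec :: "(nat \<Rightarrow> nat \<Rightarrow> complex) \<Rightarrow> nat \<Rightarrow> nat \<Rightarrow> complex list \<Rightarrow> complex list" where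
  "matvec A m n a = map (\<lambda>r. \<Sum>c<n. A r c * a ! c) [0..<m]"

end

theory Submission
  imports Defs
begin

text \<open>
  For k > 0 the combinations f_j \<minusplus> i f_j'/k satisfy w' = \<plusminus>i k w on each edge, so they are
  transported between the two ends of e_j by the factors e^(\<plusminus>i k l_j). For the trace (A, C, B, D)
  of an eigenfunction this says exactly that a = ((C + iD)/2, (A + iB)/2) is fixed by U(z);
  conversely M a is the trace of f_j(t) = a_j e^(ik(t - l_j)) + b_j e^(-ikt). Both directions rest
  on the rows of S being vertex averages minus a reflection: M a always satisfies continuity and
  Kirchhoff's law, and for the a above it returns the trace. For k = 0 eigenfunctions are constant
  on edges, since the sum of l_j |f_j'|^2 vanishes, so z = 1; as z = 1 also arises from k = 1 with
  all lengths 2\<pi> (take f_j = cos), the reverse inclusion can always be realised with k > 0.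
\<close>

definition pair_list :: "nat \<Rightarrow> (nat \<Rightarrow> 'a) \<Rightarrow> (nat \<Rightarrow> 'a) \<Rightarrow> 'a list" where
  "pair_list N a b = map a [0..<N] @ map b [0..<N]"

definition quad_list ::
  "nat \<Rightarrow> (nat \<Rightarrow> 'a) \<Rightarrow> (nat \<Rightarrow> 'a) \<Rightarrow> (nat \<Rightarrow> 'a) \<Rightarrow> (nat \<Rightarrow> 'a) \<Rightarrow> 'a list" where
  "quad_list N A C B D = pair_list N A C @ pair_list N B D"

lemma length_pair_list [simp]: "length (pair_list N a b) = 2 * N"
  by (simp add: pair_list_def)

lemma pair_list_nth [simp]:
  assumes "j < N"
  shows "pair_list N a b ! j = a j" "pair_list N a b ! (N + j) = b j"
  using assms by (simp_all add: pair_list_def nth_append)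

lemma pair_list_of_list:
  assumes "length x = 2 * N"
  shows "x = pair_list N (\<lambda>j. x ! j) (\<lambda>j. x ! (N + j))"
proof (rule nth_equalityI)
  fix i assume "i < length x"
  then consider "i < N" | j where "j < N" "i = N + j"
    using assms by (metis add_diff_inverse_nat add_less_imp_less_left mult_2)
  then show "x ! i = pair_list N (\<lambda>j. x ! j) (\<lambda>j. x ! (N + j)) ! i"
    by cases simp_all
qed (simp add: assms)

lemma map_upt_add: "map f [0..<m + n] = map f [0..<m] @ map (\<lambda>j. f (m + j)) [0..<n]"
  by (induct n) simp_all

lemma pair_list_eq_iff:
  "pair_list N a b = pair_list N a' b' \<longleftrightarrow> (\<forall>j<N. a j = a' j \<and> b j = b' j)"
  by (auto simp: pair_list_def)

lemma quad_list_eq_iff: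
  "quad_list N A C B D = quad_list N A' C' B' D' \<longleftrightarrow>
     (\<forall>j<N. A j = A' j \<and> C j = C' j \<and> B j = B' j \<and> D j = D' j)"
  by (auto simp: quad_list_def pair_list_def)

lemma quad_list_nth [simp]:
  assumes "j < N"
  shows "quad_list N A C B D ! j = A j" "quad_list N A C B D ! (N + j) = C j"
    "quad_list N A C B D ! (2 * N + j) = B j" "quad_list N A C B D ! (3 * N + j) = D j"
  using assms by (simp_all add: quad_list_def nth_append)

lemma sum_pair_list:
  "(\<Sum>c<2 * N. K c * pair_list N a b ! c) = (\<Sum>c<N. K c * a c) + (\<Sum>c<N. K (N + c) * b c)"
proof -
  let ?g = "\<lambda>c. K c * pair_list N a b ! c"
  have "(\<Sum>c<2 * N. ?g c) = (\<Sum>c<N. ?g c) + (\<Sum>c\<in>{N..<N + N}. ?g c)"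
    unfolding mult_2 lessThan_atLeast0 by (rule sum.atLeastLessThan_concat[symmetric]) simp_all
  also have "(\<Sum>c\<in>{N..<N + N}. ?g c) = (\<Sum>c<N. ?g (N + c))"
    using sum.atLeastLessThan_shift_bounds[of ?g 0 N N] by (simp add: lessThan_atLeast0 comp_def)
  finally show ?thesis by simp
qed

lemma trk_eq_quad_list:
  "trk N l k f f' = quad_list N (\<lambda>j. f j 0) (\<lambda>j. f j (l j))
     (\<lambda>j. if k = 0 then 0 else f' j 0 / complex_of_real k)
     (\<lambda>j. if k = 0 then 0 else - f' j (l j) / complex_of_real k)"
  by (simp add: trk_def quad_list_def pair_list_def)

lemma matvec_pair_rows:
  "matvec A (2 * N) n x =
     pair_list N (\<lambda>j. \<Sum>c<n. A j c * x ! c) (\<lambda>j. \<Sum>c<n. A (N + j) c * x ! c)"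
  unfolding matvec_def pair_list_def mult_2 map_upt_add ..

lemma matvec_quad_rows:
  "matvec A (4 * N) n x =
     quad_list N (\<lambda>j. \<Sum>c<n. A j c * x ! c) (\<lambda>j. \<Sum>c<n. A (N + j) c * x ! c)
       (\<lambda>j. \<Sum>c<n. A (2 * N + j) c * x ! c) (\<lambda>j. \<Sum>c<n. A (3 * N + j) c * x ! c)"
proof -
  have split: "[0..<4 * N] = [0..<N + (N + (N + N))]" by (rule arg_cong[where f = "upt 0"]) simp
  have idx: "N + (N + j) = 2 * N + j" "N + (2 * N + j) = 3 * N + j" for j
    by simp_all
  show ?thesis
    unfolding matvec_def quad_list_def pair_list_def split map_upt_add append_assoc
    by (simp only: idx)
qed

lemma expikl_nth: "j < N \<Longrightarrow> expikl N k l ! j = exp (\<i> * complex_of_real (k * l j))"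
  by (simp add: expikl_def)

lemma sum_filter_lessThan:
  "(\<Sum>c | c < N \<and> P c. g c) = (\<Sum>c<N. if P c then g c else 0)" for N :: nat
proof -
  have "{c. c < N \<and> P c} = {..<N} \<inter> Collect P" by auto
  then show ?thesis by (simp add: sum.inter_restrict)
qed

lemma sum_scaled_filter_lessThan:
  fixes N :: nat and g :: "nat \<Rightarrow> 'a::comm_semiring_0"
  shows "(\<Sum>c<N. (if P c then x else 0) * g c) = x * (\<Sum>c | c < N \<and> P c. g c)"
proof -
  have "(\<Sum>c<N. (if P c then x else 0) * g c) = (\<Sum>c<N. if P c then x * g c else 0)"
    by (rule sum.cong) auto
  then show ?thesis unfolding sum_distrib_left by (simp add: sum_filter_lessThan)
qed

section \<open>The matrices S, U(z) and M\<close>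

definition vertex_avg ::
  "nat \<Rightarrow> (nat \<Rightarrow> 'v) \<Rightarrow> (nat \<Rightarrow> 'v) \<Rightarrow> (nat \<Rightarrow> complex) \<Rightarrow> (nat \<Rightarrow> complex) \<Rightarrow> 'v \<Rightarrow> complex"
where
  "vertex_avg N orig tm a b v = 2 / of_nat (gdeg N orig tm v) *
     ((\<Sum>j | j < N \<and> tm j = v. a j) + (\<Sum>j | j < N \<and> orig j = v. b j))"

lemma Smat_entries:
  assumes "j < N" "c < N"
  shows "Smat N orig tm j c = (if tm c = orig j then 2 / real (gdeg N orig tm (orig j)) else 0)"
    "Smat N orig tm j (N + c) =
      (if orig c = orig j then 2 / real (gdeg N orig tm (orig j)) else 0) - (if c = j then 1 else 0)"
    "Smat N orig tm (N + j) c =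
      (if tm c = tm j then 2 / real (gdeg N orig tm (tm j)) else 0) - (if c = j then 1 else 0)"
    "Smat N orig tm (N + j) (N + c) = (if orig c = tm j then 2 / real (gdeg N orig tm (tm j)) else 0)"
  using assms by (simp_all add: Smat_def Let_def)

lemma Smat_rows_pair_list:
  assumes "j < N"
  shows "(\<Sum>c<2 * N. complex_of_real (Smat N orig tm j c) * pair_list N a b ! c) =
      vertex_avg N orig tm a b (orig j) - b j"
    "(\<Sum>c<2 * N. complex_of_real (Smat N orig tm (N + j) c) * pair_list N a b ! c) =
      vertex_avg N orig tm a b (tm j) - a j"
  using assms
  by (simp_all add: sum_pair_list Smat_entries vertex_avg_def if_distrib[of complex_of_real]
      left_diff_distrib sum_subtractf sum_scaled_filter_lessThan Collect_conv_if distrib_left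
      cong: if_cong)

lemma Jmat_rows_pair_list:
  assumes "j < N"
  shows "(\<Sum>c<2 * N. complex_of_real (Jmat N j c) * pair_list N a b ! c) = b j"
    "(\<Sum>c<2 * N. complex_of_real (Jmat N (N + j) c) * pair_list N a b ! c) = a j"
proof -
  have "(j + N) mod (2 * N) = N + j" "(N + j + N) mod (2 * N) = j"
    using assms by simp_all (metis add.commute add.left_commute mod_add_self2 mod_less mult_2 trans_less_add1)
  then have "complex_of_real (Jmat N j c) * y = (if c = N + j then y else 0)"
    "complex_of_real (Jmat N (N + j) c) * y = (if c = j then y else 0)" for c y
    by (simp_all add: Jmat_def)
  then show "(\<Sum>c<2 * N. complex_of_real (Jmat N j c) * pair_list N a b ! c) = b j"
    "(\<Sum>c<2 * N. complex_of_real (Jmat N (N + j) c) * pair_list N a b ! c) = a j"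
    using assms by (simp_all add: sum_pair_list)
qed

lemma Umat_fixed_iff:
  "matvec (Umat N orig tm z) (2 * N) (2 * N) (pair_list N a b) = pair_list N a b \<longleftrightarrow>
     (\<forall>j<N. z ! j * (vertex_avg N orig tm a b (orig j) - b j) = a j \<and>
            z ! j * (vertex_avg N orig tm a b (tm j) - a j) = b j)"
proof -
  have "(\<Sum>c<2 * N. Umat N orig tm z r c * x ! c) =
      z ! (r mod N) * (\<Sum>c<2 * N. complex_of_real (Smat N orig tm r c) * x ! c)" for r x
    by (simp add: Umat_def sum_distrib_left mult.assoc)
  then show ?thesis
    by (simp add: matvec_pair_rows pair_list_eq_iff Smat_rows_pair_list cong: conj_cong)
qed

lemma Mmat_pair_list:
  "matvec (Mmat N orig tm) (4 * N) (2 * N) (pair_list N a b) =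
     quad_list N (\<lambda>j. vertex_avg N orig tm a b (orig j)) (\<lambda>j. vertex_avg N orig tm a b (tm j))
       (\<lambda>j. \<i> * (vertex_avg N orig tm a b (orig j) - 2 * b j))
       (\<lambda>j. \<i> * (vertex_avg N orig tm a b (tm j) - 2 * a j))"
proof -
  have rows: "Mmat N orig tm j c = complex_of_real (Smat N orig tm j c) + complex_of_real (Jmat N j c)"
    "Mmat N orig tm (N + j) c =
       complex_of_real (Smat N orig tm (N + j) c) + complex_of_real (Jmat N (N + j) c)"
    "Mmat N orig tm (2 * N + j) c =
       \<i> * (complex_of_real (Smat N orig tm j c) - complex_of_real (Jmat N j c))"
    "Mmat N orig tm (3 * N + j) c =
       \<i> * (complex_of_real (Smat N orig tm (N + j) c) - complex_of_real (Jmat N (N + j) c))"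
    if "j < N" for j c
    using that by (simp_all add: Mmat_def)
  show ?thesis
    unfolding matvec_quad_rows quad_list_eq_iff
    by (simp add: rows distrib_right left_diff_distrib sum.distrib sum_subtractf
        sum_distrib_left[symmetric] mult.assoc Smat_rows_pair_list Jmat_rows_pair_list)
qed

section \<open>Vertex conditions on traces\<close>

(* The trace is laid out as (A, C, B, D), as in trk, so Kirchhoff's law becomes \<Sum> B + \<Sum> D = 0. *)
definition vertex_conditions :: "nat \<Rightarrow> (nat \<Rightarrow> 'v) \<Rightarrow> (nat \<Rightarrow> 'v) \<Rightarrow> complex list \<Rightarrow> bool" where
  "vertex_conditions N orig tm t \<longleftrightarrow>
     (\<exists>\<phi>. \<forall>j<N. t ! j = \<phi> (orig j) \<and> t ! (N + j) = \<phi> (tm j)) \<and>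
     (\<forall>v. (\<Sum>j | j < N \<and> orig j = v. t ! (2 * N + j)) + (\<Sum>j | j < N \<and> tm j = v. t ! (3 * N + j)) = 0)"

lemma vertex_conditions_quad_list:
  "vertex_conditions N orig tm (quad_list N A C B D) \<longleftrightarrow>
     (\<exists>\<phi>. \<forall>j<N. A j = \<phi> (orig j) \<and> C j = \<phi> (tm j)) \<and>
     (\<forall>v. (\<Sum>j | j < N \<and> orig j = v. B j) + (\<Sum>j | j < N \<and> tm j = v. D j) = 0)"
proof -
  have "(\<Sum>j | j < N \<and> orig j = v. quad_list N A C B D ! (2 * N + j)) = (\<Sum>j | j < N \<and> orig j = v. B j)"
    "(\<Sum>j | j < N \<and> tm j = v. quad_list N A C B D ! (3 * N + j)) = (\<Sum>j | j < N \<and> tm j = v. D j)" for v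
    by (auto intro: sum.cong)
  then show ?thesis by (simp add: vertex_conditions_def)
qed

lemma gdeg_pos:
  assumes "j < N"
  shows "gdeg N orig tm (orig j) > 0" "gdeg N orig tm (tm j) > 0"
  using assms by (auto simp: gdeg_def card_gt_0_iff)

lemma gdeg_mult_vertex_avg:
  "of_nat (gdeg N orig tm v) * vertex_avg N orig tm a b v =
     2 * ((\<Sum>j | j < N \<and> tm j = v. a j) + (\<Sum>j | j < N \<and> orig j = v. b j))"
proof (cases "gdeg N orig tm v = 0")
  case True
  then have "{j. j < N \<and> tm j = v} = {}" "{j. j < N \<and> orig j = v} = {}"
    by (auto simp: gdeg_def card_eq_0_iff)
  with True show ?thesis by (simp only:) simp
qed (simp add: vertex_avg_def)

lemma vertex_conditions_Mmat:
  "vertex_conditions N orig tm (matvec (Mmat N orig tm) (4 * N) (2 * N) (pair_list N a b))"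
  unfolding Mmat_pair_list vertex_conditions_quad_list
proof (intro conjI allI exI[of _ "vertex_avg N orig tm a b"])
  fix v
  let ?O = "{j. j < N \<and> orig j = v}" and ?T = "{j. j < N \<and> tm j = v}"
  let ?\<psi> = "vertex_avg N orig tm a b"
  have "(\<Sum>j\<in>?O. \<i> * (?\<psi> (orig j) - 2 * b j)) + (\<Sum>j\<in>?T. \<i> * (?\<psi> (tm j) - 2 * a j)) =
      (\<Sum>j\<in>?O. \<i> * (?\<psi> v - 2 * b j)) + (\<Sum>j\<in>?T. \<i> * (?\<psi> v - 2 * a j))"
    by (intro arg_cong2[where f = "(+)"] sum.cong) auto
  also have "\<dots> = \<i> * (of_nat (card ?O + card ?T) * ?\<psi> v - 2 * ((\<Sum>j\<in>?T. a j) + (\<Sum>j\<in>?O. b j)))"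
    by (simp add: sum_distrib_left sum_subtractf algebra_simps)
  also have "\<dots> = 0"
    using gdeg_mult_vertex_avg[of N orig tm v a b] by (simp add: gdeg_def)
  finally show "(\<Sum>j\<in>?O. \<i> * (?\<psi> (orig j) - 2 * b j)) + (\<Sum>j\<in>?T. \<i> * (?\<psi> (tm j) - 2 * a j)) = 0" .
qed simp_all

lemma vertex_avg_half_trace:
  assumes "vertex_conditions N orig tm (quad_list N A C B D)" and "j < N"
  defines "\<psi> \<equiv> vertex_avg N orig tm (\<lambda>j. (C j + \<i> * D j) / 2) (\<lambda>j. (A j + \<i> * B j) / 2)"
  shows "\<psi> (orig j) = A j" "\<psi> (tm j) = C j"
proof -
  obtain \<phi> where \<phi>: "\<And>j. j < N \<Longrightarrow> A j = \<phi> (orig j) \<and> C j = \<phi> (tm j)"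
    and kirchhoff: "\<And>v. (\<Sum>j | j < N \<and> orig j = v. B j) + (\<Sum>j | j < N \<and> tm j = v. D j) = 0"
    using assms(1) unfolding vertex_conditions_quad_list by blast
  have \<psi>_eq: "\<psi> v = \<phi> v" if "gdeg N orig tm v > 0" for v
  proof -
    let ?O = "{j. j < N \<and> orig j = v}" and ?T = "{j. j < N \<and> tm j = v}"
    have "of_nat (gdeg N orig tm v) * \<psi> v =
        (\<Sum>j\<in>?T. C j + \<i> * D j) + (\<Sum>j\<in>?O. A j + \<i> * B j)"
      unfolding \<psi>_def gdeg_mult_vertex_avg by (simp add: sum_divide_distrib[symmetric])
    also have "\<dots> = (\<Sum>j\<in>?T. \<phi> v) + (\<Sum>j\<in>?O. \<phi> v) +
        \<i> * ((\<Sum>j\<in>?O. B j) + (\<Sum>j\<in>?T. D j))"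
      using \<phi> by (simp add: sum.distrib sum_distrib_left algebra_simps)
    also have "\<dots> = of_nat (gdeg N orig tm v) * \<phi> v"
      by (simp add: kirchhoff gdeg_def algebra_simps)
    finally show ?thesis using that by simp
  qed
  show "\<psi> (orig j) = A j" "\<psi> (tm j) = C j"
    using \<phi>[OF assms(2)] \<psi>_eq[OF gdeg_pos(1)[OF assms(2)]] \<psi>_eq[OF gdeg_pos(2)[OF assms(2)]]
    by simp_all
qed

(* x holds the amplitudes a_j, b_j of f_j(t) = a_j e^(ik(t - l_j)) + b_j e^(-ikt) read off from the trace. *)
lemma fixed_vector_of_trace:
  assumes vc: "vertex_conditions N orig tm (quad_list N A C B D)"
    and edge: "\<And>j. j < N \<Longrightarrow>
      z ! j * (A j - \<i> * B j) = C j + \<i> * D j \<and> z ! j * (C j - \<i> * D j) = A j + \<i> * B j"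
  defines "x \<equiv> pair_list N (\<lambda>j. (C j + \<i> * D j) / 2) (\<lambda>j. (A j + \<i> * B j) / 2)"
  shows "matvec (Umat N orig tm z) (2 * N) (2 * N) x = x"
    and "matvec (Mmat N orig tm) (4 * N) (2 * N) x = quad_list N A C B D"
proof -
  note avg = vertex_avg_half_trace[OF vc]
  show "matvec (Umat N orig tm z) (2 * N) (2 * N) x = x"
    unfolding x_def Umat_fixed_iff using edge by (simp add: avg field_simps)
  show "matvec (Mmat N orig tm) (4 * N) (2 * N) x = quad_list N A C B D"
    unfolding x_def Mmat_pair_list quad_list_eq_iff by (simp add: avg field_simps)
qed

section \<open>Edge equations\<close>

lemma has_vector_derivative_cexp_real:
  "((\<lambda>t. exp (c * complex_of_real t)) has_vector_derivative c * exp (c * complex_of_real t)) (at t within S)"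
  by (rule has_vector_derivative_real_field) (auto intro!: derivative_eq_intros)

lemma linear_ode_explicit_solution:
  fixes u :: "real \<Rightarrow> complex"
  assumes ode: "\<And>t. t \<in> {0..l} \<Longrightarrow> (u has_vector_derivative c * u t) (at t within {0..l})"
    and t: "t \<in> {0..l}"
  shows "u t = exp (c * complex_of_real t) * u 0"
proof -
  have deriv: "((\<lambda>t. exp (- c * complex_of_real t) * u t) has_vector_derivative 0) (at s within {0..l})"
    if "s \<in> {0..l}" for s
    using has_vector_derivative_mult[OF has_vector_derivative_cexp_real[of "- c"] ode[OF that]]
    by (simp add: algebra_simps)
  obtain K where K: "\<And>s. s \<in> {0..l} \<Longrightarrow> exp (- c * complex_of_real s) * u s = K"
    using has_vector_derivative_zero_constant[of "{0..l}", OF convex_real_interval(5) deriv] by blast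
  have "0 \<in> {0..l}" using t by auto
  from K[OF this] K[OF t] have "exp (- c * complex_of_real t) * u t = u 0" by simp
  then have "exp (c * complex_of_real t) * (exp (- c * complex_of_real t) * u t) =
      exp (c * complex_of_real t) * u 0" by simp
  then show ?thesis by (simp add: mult.assoc[symmetric] exp_add[symmetric])
qed

lemma affine_if_second_derivative_zero:
  fixes u u' :: "real \<Rightarrow> complex"
  assumes ode: "\<And>t. t \<in> {0..l} \<Longrightarrow>
      (u has_vector_derivative u' t) (at t within {0..l}) \<and> (u' has_vector_derivative 0) (at t within {0..l})"
    and t: "t \<in> {0..l}"
  shows "u' t = u' 0" "u t = u 0 + complex_of_real t * u' 0"
proof -
  have u': "u' s = u' 0" if s: "s \<in> {0..l}" for s
  proof -
    have "(u' has_vector_derivative 0 * u' r) (at r within {0..l})" if "r \<in> {0..l}" for r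
      using ode[OF that] by simp
    from linear_ode_explicit_solution[OF this s] show ?thesis by simp
  qed
  then show "u' t = u' 0" using t .
  let ?w = "\<lambda>s. u s - complex_of_real s * u' 0"
  have "(?w has_vector_derivative 0 * ?w s) (at s within {0..l})" if s: "s \<in> {0..l}" for s
  proof -
    have "(?w has_vector_derivative u' s - 1 * u' 0) (at s within {0..l})"
      using ode[OF s] by (intro derivative_eq_intros) auto
    then show ?thesis using u'[OF s] by simp
  qed
  from linear_ode_explicit_solution[OF this t] show "u t = u 0 + complex_of_real t * u' 0"
    by (simp add: diff_eq_eq)
qed

(* u \<minusplus> i u'/k solve w' = \<plusminus>i k w. *)
lemma helmholtz_edge_transfer:
  fixes u u' :: "real \<Rightarrow> complex"
  assumes k: "k \<noteq> 0" and l: "0 \<le> l"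
    and ode: "\<And>t. t \<in> {0..l} \<Longrightarrow> (u has_vector_derivative u' t) (at t within {0..l}) \<and>
        (u' has_vector_derivative - complex_of_real (k\<^sup>2) * u t) (at t within {0..l})"
  shows "exp (\<i> * complex_of_real (k * l)) * (u 0 - \<i> * (u' 0 / k)) = u l + \<i> * (- u' l / k)"
    and "exp (\<i> * complex_of_real (k * l)) * (u l - \<i> * (- u' l / k)) = u 0 + \<i> * (u' 0 / k)"
proof -
  have lin: "u l + s * u' l = exp (c * complex_of_real l) * (u 0 + s * u' 0)"
    if rel: "\<And>t. u' t + s * (- complex_of_real (k\<^sup>2) * u t) = c * (u t + s * u' t)" for s c
  proof (rule linear_ode_explicit_solution[of l "\<lambda>t. u t + s * u' t"])
    fix t assume t: "t \<in> {0..l}"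
    have "((\<lambda>t. u t + s * u' t) has_vector_derivative u' t + s * (- complex_of_real (k\<^sup>2) * u t))
        (at t within {0..l})"
      using ode[OF t] by (auto intro!: derivative_eq_intros)
    then show "((\<lambda>t. u t + s * u' t) has_vector_derivative c * (u t + s * u' t)) (at t within {0..l})"
      by (simp only: rel)
  qed (use l in auto)
  define E where "E = exp (\<i> * complex_of_real (k * l))"
  have E_inv: "E * exp (- \<i> * k * complex_of_real l) = 1"
    by (simp add: E_def exp_add[symmetric])
  have "u l - \<i> / k * u' l = E * (u 0 - \<i> / k * u' 0)"
    using lin[of "- \<i> / k" "\<i> * k"] k by (simp add: E_def field_simps power2_eq_square)
  then show "exp (\<i> * complex_of_real (k * l)) * (u 0 - \<i> * (u' 0 / k)) = u l + \<i> * (- u' l / k)"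
    by (simp add: E_def)
  have "u l + \<i> / k * u' l = exp (- \<i> * k * complex_of_real l) * (u 0 + \<i> / k * u' 0)"
    using lin[of "\<i> / k" "- \<i> * k"] k by (simp add: field_simps power2_eq_square)
  then have "E * (u l + \<i> / k * u' l) = u 0 + \<i> / k * u' 0"
    using E_inv by (simp add: mult.assoc[symmetric])
  then show "exp (\<i> * complex_of_real (k * l)) * (u l - \<i> * (- u' l / k)) = u 0 + \<i> * (u' 0 / k)"
    by (simp add: E_def)
qed

lemma has_vector_derivative_exp_pair:
  fixes \<alpha> \<beta> \<kappa> :: complex
  shows "((\<lambda>t. \<alpha> * exp (\<kappa> * complex_of_real t) + \<beta> * exp (- \<kappa> * complex_of_real t)) has_vector_derivative
      \<kappa> * \<alpha> * exp (\<kappa> * complex_of_real t) - \<kappa> * \<beta> * exp (- \<kappa> * complex_of_real t)) (at t within S)"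
    and "((\<lambda>t. \<kappa> * \<alpha> * exp (\<kappa> * complex_of_real t) - \<kappa> * \<beta> * exp (- \<kappa> * complex_of_real t))
      has_vector_derivative \<kappa>\<^sup>2 * (\<alpha> * exp (\<kappa> * complex_of_real t) + \<beta> * exp (- \<kappa> * complex_of_real t)))
      (at t within S)"
proof -
  note d1 = has_vector_derivative_cexp_real[of \<kappa> t S]
    and d2 = has_vector_derivative_cexp_real[of "- \<kappa>" t S]
  show "((\<lambda>t. \<alpha> * exp (\<kappa> * complex_of_real t) + \<beta> * exp (- \<kappa> * complex_of_real t)) has_vector_derivative
      \<kappa> * \<alpha> * exp (\<kappa> * complex_of_real t) - \<kappa> * \<beta> * exp (- \<kappa> * complex_of_real t)) (at t within S)"
    by (rule has_vector_derivative_eq_rhs[OF has_vector_derivative_add[OF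
          has_vector_derivative_mult_right[OF d1] has_vector_derivative_mult_right[OF d2]]])
      (simp add: algebra_simps)
  show "((\<lambda>t. \<kappa> * \<alpha> * exp (\<kappa> * complex_of_real t) - \<kappa> * \<beta> * exp (- \<kappa> * complex_of_real t))
      has_vector_derivative \<kappa>\<^sup>2 * (\<alpha> * exp (\<kappa> * complex_of_real t) + \<beta> * exp (- \<kappa> * complex_of_real t)))
      (at t within S)"
    by (rule has_vector_derivative_eq_rhs[OF has_vector_derivative_diff[OF
          has_vector_derivative_mult_right[OF d1] has_vector_derivative_mult_right[OF d2]]])
      (simp add: algebra_simps power2_eq_square)
qed

section \<open>Eigenfunctions and fixed vectors of U(z)\<close>

lemma circulation_orthogonal_potential_differences:
  fixes F :: "nat \<Rightarrow> 'a::comm_ring"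
  assumes circ: "\<And>v. (\<Sum>j | j < N \<and> orig j = v. F j) = (\<Sum>j | j < N \<and> tm j = v. F j)"
  shows "(\<Sum>j<N. F j * (\<phi> (tm j) - \<phi> (orig j))) = 0"
proof -
  define V where "V = orig ` {..<N} \<union> tm ` {..<N}"
  have regroup: "(\<Sum>j<N. F j * \<phi> (p j)) = (\<Sum>v\<in>V. \<phi> v * (\<Sum>j | j < N \<and> p j = v. F j))"
    if "p ` {..<N} \<subseteq> V" for p
  proof -
    have "(\<Sum>j<N. F j * \<phi> (p j)) = (\<Sum>v\<in>V. \<Sum>j | j < N \<and> p j = v. F j * \<phi> (p j))"
      using sum.group[of "{..<N}" V p "\<lambda>j. F j * \<phi> (p j)"] that by (simp add: V_def)
    also have "\<dots> = (\<Sum>v\<in>V. \<phi> v * (\<Sum>j | j < N \<and> p j = v. F j))"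
      by (auto simp: sum_distrib_left mult.commute intro!: sum.cong)
    finally show ?thesis .
  qed
  have "(\<Sum>j<N. F j * (\<phi> (tm j) - \<phi> (orig j))) = (\<Sum>j<N. F j * \<phi> (tm j)) - (\<Sum>j<N. F j * \<phi> (orig j))"
    by (simp add: right_diff_distrib sum_subtractf)
  also have "\<dots> = 0"
    by (simp add: regroup V_def circ)
  finally show ?thesis .
qed

(* Each f_j is affine with slope \<beta>_j and Kirchhoff makes \<beta> a circulation, hence
   \<Sum> l_j |\<beta>_j|^2 = \<Sum> cnj \<beta>_j (\<phi>(\<tau> e_j) - \<phi>(o e_j)) = 0. *)
lemma eigfun_zero_wavenumber_edge_constant:
  assumes ef: "is_eigfun N orig tm l 0 f f'" and l: "\<forall>j<N. 0 < l j" and j: "j < N"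
  shows "f j (l j) = f j 0"
proof -
  obtain \<phi> where \<phi>: "\<And>j. j < N \<Longrightarrow> f j 0 = \<phi> (orig j) \<and> f j (l j) = \<phi> (tm j)"
    and kirchhoff: "\<And>v. (\<Sum>j | j < N \<and> orig j = v. f' j 0) - (\<Sum>j | j < N \<and> tm j = v. f' j (l j)) = 0"
    and ode: "\<And>j t. j < N \<Longrightarrow> t \<in> {0..l j} \<Longrightarrow> (f j has_vector_derivative f' j t) (at t within {0..l j}) \<and>
        (f' j has_vector_derivative 0) (at t within {0..l j})"
    using ef unfolding is_eigfun_def by auto
  define \<beta> where "\<beta> j = f' j 0" for j
  have end_l: "l j \<in> {0..l j}" if "j < N" for j using l that by (simp add: less_imp_le)
  have slope: "\<phi> (tm j) - \<phi> (orig j) = of_real (l j) * \<beta> j" if "j < N" for j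
    using affine_if_second_derivative_zero(2)[OF ode[OF that] end_l[OF that]] \<phi>[OF that]
    by (simp add: \<beta>_def)
  have "(\<Sum>j | j < N \<and> orig j = v. cnj (\<beta> j)) = (\<Sum>j | j < N \<and> tm j = v. cnj (\<beta> j))" for v
  proof -
    have "(\<Sum>j | j < N \<and> tm j = v. f' j (l j)) = (\<Sum>j | j < N \<and> tm j = v. \<beta> j)"
      using affine_if_second_derivative_zero(1)[OF ode end_l] by (simp add: \<beta>_def)
    with kirchhoff[of v] show ?thesis by (simp add: \<beta>_def flip: cnj_sum)
  qed
  then have "(\<Sum>j<N. cnj (\<beta> j) * (\<phi> (tm j) - \<phi> (orig j))) = 0"
    by (rule circulation_orthogonal_potential_differences)
  then have "(\<Sum>j<N. complex_of_real (l j) * (\<beta> j * cnj (\<beta> j))) = 0"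
    by (simp add: slope mult_ac)
  then have "(\<Sum>j<N. complex_of_real (l j * (cmod (\<beta> j))\<^sup>2)) = 0"
    by (simp only: of_real_mult complex_norm_square)
  then have "(\<Sum>j<N. l j * (cmod (\<beta> j))\<^sup>2) = 0"
    by (simp only: of_real_sum[symmetric] of_real_eq_0_iff)
  then have "l j * (cmod (\<beta> j))\<^sup>2 = 0"
    using l j by (subst (asm) sum_nonneg_eq_0_iff) (auto simp: less_imp_le)
  then have "\<beta> j = 0" using l j by force
  with slope[OF j] \<phi>[OF j] show ?thesis by simp
qed

lemma vertex_conditions_trk:
  assumes "is_eigfun N orig tm l k f f'"
  shows "vertex_conditions N orig tm (trk N l k f f')"
proof -
  obtain \<phi> where "\<forall>j<N. f j 0 = \<phi> (orig j) \<and> f j (l j) = \<phi> (tm j)"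
    and kirchhoff: "\<And>v. (\<Sum>j | j < N \<and> orig j = v. f' j 0) - (\<Sum>j | j < N \<and> tm j = v. f' j (l j)) = 0"
    using assms unfolding is_eigfun_def by blast
  moreover have "(\<Sum>j | j < N \<and> orig j = v. if k = 0 then 0 else f' j 0 / k) +
      (\<Sum>j | j < N \<and> tm j = v. if k = 0 then 0 else - f' j (l j) / k) = 0" for v
    using kirchhoff[of v] by (cases "k = 0")
      (simp_all add: sum_divide_distrib[symmetric] sum_negf diff_divide_distrib[symmetric])
  ultimately show ?thesis
    unfolding trk_eq_quad_list vertex_conditions_quad_list by auto
qed

lemma is_eigfun_if_vertex_conditions:
  assumes k: "k \<noteq> 0"
    and ode: "\<And>j t. j < N \<Longrightarrow> t \<in> {0..l j} \<Longrightarrow> (f j has_vector_derivative f' j t) (at t within {0..l j}) \<and>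
        (f' j has_vector_derivative - complex_of_real (k\<^sup>2) * f j t) (at t within {0..l j})"
    and vc: "vertex_conditions N orig tm (trk N l k f f')"
  shows "is_eigfun N orig tm l k f f'"
proof -
  obtain \<phi> where "\<forall>j<N. f j 0 = \<phi> (orig j) \<and> f j (l j) = \<phi> (tm j)"
    and kirchhoff: "\<And>v. (\<Sum>j | j < N \<and> orig j = v. f' j 0 / k) + (\<Sum>j | j < N \<and> tm j = v. - f' j (l j) / k) = 0"
    using vc k unfolding trk_eq_quad_list vertex_conditions_quad_list by auto
  moreover have "(\<Sum>j | j < N \<and> orig j = v. f' j 0) - (\<Sum>j | j < N \<and> tm j = v. f' j (l j)) = 0" for v
    using kirchhoff[of v] k
    by (simp add: sum_divide_distrib[symmetric] sum_negf diff_divide_distrib[symmetric])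
  ultimately show ?thesis
    unfolding is_eigfun_def using ode by blast
qed

lemma Umat_fixed_vector_of_eigfun:
  assumes l: "\<forall>j<N. 0 < l j" and k: "0 \<le> k" and ef: "is_eigfun N orig tm l k f f'"
  obtains x where "length x = 2 * N"
    "matvec (Umat N orig tm (expikl N k l)) (2 * N) (2 * N) x = x"
    "matvec (Mmat N orig tm) (4 * N) (2 * N) x = trk N l k f f'"
proof -
  define A where "A = (\<lambda>j. f j 0)"
  define C where "C = (\<lambda>j. f j (l j))"
  define B where "B = (\<lambda>j. if k = 0 then 0 else f' j 0 / k)"
  define D where "D = (\<lambda>j. if k = 0 then 0 else - f' j (l j) / k)"
  have trk: "trk N l k f f' = quad_list N A C B D"
    by (simp add: trk_eq_quad_list A_def B_def C_def D_def)
  have vc: "vertex_conditions N orig tm (quad_list N A C B D)"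
    using vertex_conditions_trk[OF ef] by (simp add: trk)
  have "expikl N k l ! j * (A j - \<i> * B j) = C j + \<i> * D j \<and>
      expikl N k l ! j * (C j - \<i> * D j) = A j + \<i> * B j" if j: "j < N" for j
  proof (cases "k = 0")
    case True
    then show ?thesis
      using eigfun_zero_wavenumber_edge_constant[OF ef[unfolded True] l j]
      by (simp add: expikl_nth j A_def B_def C_def D_def)
  next
    case False
    have "0 \<le> l j" using l j by (simp add: less_imp_le)
    moreover have "(f j has_vector_derivative f' j t) (at t within {0..l j}) \<and>
        (f' j has_vector_derivative - complex_of_real (k\<^sup>2) * f j t) (at t within {0..l j})"
      if "t \<in> {0..l j}" for t
      using ef j that unfolding is_eigfun_def by blast
    ultimately show ?thesis
      using helmholtz_edge_transfer[OF False, of "l j" "f j" "f' j"] False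
      by (simp add: expikl_nth j A_def B_def C_def D_def)
  qed
  note fixed = fixed_vector_of_trace[OF vc this]
  show thesis by (rule that[OF length_pair_list fixed(1) fixed(2)[folded trk]])
qed

lemma eigfun_of_Umat_fixed_vector:
  assumes k: "k \<noteq> 0"
    and fixed: "matvec (Umat N orig tm (expikl N k l)) (2 * N) (2 * N) (pair_list N a b) = pair_list N a b"
  obtains f f' where "is_eigfun N orig tm l k f f'"
    "trk N l k f f' = matvec (Mmat N orig tm) (4 * N) (2 * N) (pair_list N a b)"
proof -
  define \<kappa> where "\<kappa> = \<i> * complex_of_real k"
  define E where "E j = exp (\<kappa> * complex_of_real (l j))" for j
  define \<zeta> where "\<zeta> j = a j * exp (- \<kappa> * complex_of_real (l j))" for j
  define f where "f j t = \<zeta> j * exp (\<kappa> * complex_of_real t) + b j * exp (- \<kappa> * complex_of_real t)" for j t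
  define f' where "f' j t = \<kappa> * \<zeta> j * exp (\<kappa> * complex_of_real t) - \<kappa> * b j * exp (- \<kappa> * complex_of_real t)"
    for j t
  let ?\<psi> = "vertex_avg N orig tm a b"
  have E_inv: "exp (- \<kappa> * complex_of_real (l j)) * E j = 1" for j
    by (simp add: E_def exp_add[symmetric])
  have edge: "?\<psi> (orig j) - b j = \<zeta> j" "?\<psi> (tm j) - a j = b j * exp (- \<kappa> * complex_of_real (l j))"
    if j: "j < N" for j
  proof -
    have "E j * (?\<psi> (orig j) - b j) = a j" "E j * (?\<psi> (tm j) - a j) = b j"
      using fixed j unfolding Umat_fixed_iff by (simp_all add: expikl_nth E_def \<kappa>_def mult.assoc)
    then show "?\<psi> (orig j) - b j = \<zeta> j" "?\<psi> (tm j) - a j = b j * exp (- \<kappa> * complex_of_real (l j))"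
      using E_inv[of j] unfolding \<zeta>_def by (metis mult.assoc mult.commute mult_1)+
  qed
  have trk: "trk N l k f f' = matvec (Mmat N orig tm) (4 * N) (2 * N) (pair_list N a b)"
    unfolding trk_eq_quad_list Mmat_pair_list quad_list_eq_iff
  proof (intro allI impI conjI)
    fix j assume j: "j < N"
    have \<zeta>E: "\<zeta> j * E j = a j" using E_inv[of j] by (simp add: \<zeta>_def mult.assoc)
    show "f j 0 = ?\<psi> (orig j)" using edge(1)[OF j] by (simp add: f_def diff_eq_eq)
    show "f j (l j) = ?\<psi> (tm j)" using edge(2)[OF j] \<zeta>E by (simp add: f_def E_def diff_eq_eq)
    show "(if k = 0 then 0 else f' j 0 / complex_of_real k) = \<i> * (?\<psi> (orig j) - 2 * b j)"
      using edge(1)[OF j] k by (simp add: f'_def \<kappa>_def field_simps)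
    show "(if k = 0 then 0 else - f' j (l j) / complex_of_real k) = \<i> * (?\<psi> (tm j) - 2 * a j)"
      using edge(2)[OF j] \<zeta>E k by (simp add: f'_def \<kappa>_def E_def field_simps)
  qed
  have "\<kappa>\<^sup>2 = - complex_of_real (k\<^sup>2)"
    by (simp add: \<kappa>_def power_mult_distrib)
  then have "(f j has_vector_derivative f' j t) (at t within {0..l j}) \<and>
      (f' j has_vector_derivative - complex_of_real (k\<^sup>2) * f j t) (at t within {0..l j})" for j t
    using has_vector_derivative_exp_pair[where \<alpha> = "\<zeta> j" and \<beta> = "b j" and \<kappa> = \<kappa>]
    unfolding f_def f'_def by simp
  then have "is_eigfun N orig tm l k f f'"
    by (rule is_eigfun_if_vertex_conditions[OF k]) (simp add: trk vertex_conditions_Mmat)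
  then show thesis using trk by (rule that)
qed

lemma is_eigval_cos:
  assumes "0 < N"
  shows "is_eigval N orig tm (\<lambda>_. 2 * pi) 1"
proof -
  let ?f = "\<lambda>(j::nat) t. cos (complex_of_real t)" and ?f' = "\<lambda>(j::nat) t. - sin (complex_of_real t)"
  have "is_eigfun N orig tm (\<lambda>_. 2 * pi) 1 ?f ?f'"
    unfolding is_eigfun_def
  proof (intro conjI allI impI ballI exI[of _ "\<lambda>_. 1"])
    fix j t
    show "(?f j has_vector_derivative ?f' j t) (at t within {0..2 * pi})"
      by (auto intro!: derivative_eq_intros has_vector_derivative_real_field)
    show "(?f' j has_vector_derivative - complex_of_real (1\<^sup>2) * ?f j t) (at t within {0..2 * pi})"
      by (auto intro!: derivative_eq_intros has_vector_derivative_real_field)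
  qed (simp_all add: cos_of_real sin_of_real)
  moreover have "?f 0 0 \<noteq> 0" by simp
  ultimately show ?thesis
    unfolding is_eigval_def using assms by force
qed

lemma Sigma_set_positive_wavenumber:
  assumes "z \<in> Sigma_set N orig tm"
  obtains l k where "0 < k" "\<forall>j<N. 0 < l j" "is_eigval N orig tm l k" "z = expikl N k l"
proof -
  obtain l k where z: "z = expikl N k l" and l: "\<forall>j<N. 0 < l j" and k: "0 \<le> k"
    and ev: "is_eigval N orig tm l k"
    using assms unfolding Sigma_set_def Tset_def by auto
  show thesis
  proof (cases "k = 0")
    case False
    with that[of k l] z l k ev show ?thesis by simp
  next
    case True
    from ev have "0 < N" unfolding is_eigval_def by auto
    have "expikl N 0 l = expikl N 1 (\<lambda>_. 2 * pi)"
      by (simp add: expikl_def mult.commute)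
    then show ?thesis
      using is_eigval_cos[OF \<open>0 < N\<close>] True z by (intro that[of 1 "\<lambda>_. 2 * pi"]) auto
  qed
qed

lemma Tset_memberE:
  assumes "p \<in> Tset N orig tm"
  obtains a where "fst p \<in> Sigma_set N orig tm" "length a = 2 * N"
    "matvec (Umat N orig tm (fst p)) (2 * N) (2 * N) a = a"
    "snd p = matvec (Mmat N orig tm) (4 * N) (2 * N) a"
proof -
  obtain l k f f' where p: "p = (expikl N k l, trk N l k f f')" and l: "\<forall>j<N. 0 < l j"
    and k: "0 \<le> k" and ef: "is_eigfun N orig tm l k f f'"
    using assms unfolding Tset_def by blast
  have z: "fst p \<in> Sigma_set N orig tm"
    unfolding Sigma_set_def using assms by blast
  obtain x where "length x = 2 * N" "matvec (Umat N orig tm (expikl N k l)) (2 * N) (2 * N) x = x"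
    "matvec (Mmat N orig tm) (4 * N) (2 * N) x = trk N l k f f'"
    using Umat_fixed_vector_of_eigfun[OF l k ef] .
  with z show thesis
    by (intro that[of x]) (simp_all add: p)
qed

lemma Umat_fixed_vector_in_Tset:
  assumes z: "z \<in> Sigma_set N orig tm" and len: "length a = 2 * N"
    and fixed: "matvec (Umat N orig tm z) (2 * N) (2 * N) a = a"
  shows "(z, matvec (Mmat N orig tm) (4 * N) (2 * N) a) \<in> Tset N orig tm"
proof -
  obtain l k where k: "0 < k" and l: "\<forall>j<N. 0 < l j" and ev: "is_eigval N orig tm l k"
    and z_eq: "z = expikl N k l"
    using Sigma_set_positive_wavenumber[OF z] .
  define x where "x = pair_list N (\<lambda>j. a ! j) (\<lambda>j. a ! (N + j))"
  have a: "a = x"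
    unfolding x_def using len by (rule pair_list_of_list)
  have "k \<noteq> 0" using k by simp
  moreover have "matvec (Umat N orig tm (expikl N k l)) (2 * N) (2 * N) x = x"
    using fixed unfolding z_eq a .
  ultimately obtain f f' where "is_eigfun N orig tm l k f f'"
    "trk N l k f f' = matvec (Mmat N orig tm) (4 * N) (2 * N) x"
    unfolding x_def by (rule eigfun_of_Umat_fixed_vector)
  with k l ev show ?thesis
    unfolding z_eq Tset_def a by force
qed

theorem mainTheorem7:
  fixes N :: nat and orig tm :: "nat \<Rightarrow> 'v"
  shows "Tset N orig tm =
    {(z, matvec (Mmat N orig tm) (4 * N) (2 * N) a) | z a.
       z \<in> Sigma_set N orig tm \<and> length a = 2 * N \<and>
       matvec (Umat N orig tm z) (2 * N) (2 * N) a = a}"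
  (is "_ = ?range")
proof (intro equalityI subsetI)
  fix p assume "p \<in> Tset N orig tm"
  then obtain a where "fst p \<in> Sigma_set N orig tm" "length a = 2 * N"
    "matvec (Umat N orig tm (fst p)) (2 * N) (2 * N) a = a"
    "snd p = matvec (Mmat N orig tm) (4 * N) (2 * N) a"
    by (rule Tset_memberE)
  then show "p \<in> ?range"
    by (intro CollectI exI[of _ "fst p"] exI[of _ a]) (simp add: prod_eq_iff)
next
  fix p assume "p \<in> ?range"
  then obtain z a where "p = (z, matvec (Mmat N orig tm) (4 * N) (2 * N) a)"
    "z \<in> Sigma_set N orig tm" "length a = 2 * N" "matvec (Umat N orig tm z) (2 * N) (2 * N) a = a"
    by blast
  then show "p \<in> Tset N orig tm" by (simp add: Umat_fixed_vector_in_Tset)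
qed

end
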